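(* Let $W$ be an outcome satisfying rank-JR. Then $W$ satisfies $(1+\sqrt2)$-proportional fairness, satisfies $2$-individual fairness (when $N\subseteq C$), and is in the $\left(\gamma,\frac{2\gamma}{\gamma-1}\right)$-transferable core for every $\gamma>1$.
   Context: Let $(\mathcal X,d)$ be a metric space, $N=[n]$ a set of agents and $C$ a set of candidates located in $\mathcal X$, $k\in\mathbb N^+$; an outcome is $W\subseteq C$ with $|W|\le k$; $B(i,r)=\{x\in\mathcal X:d(i,x)\le r\}$; $d(i,W)=\min_{c\in W}d(i,c)$. Rank-JR: for every $y\in\mathbb R$ and every $N'\subseteq N$ with $|N'|\ge n/k$ and $|\bigcap_{i\in N'}B(i,y)\cap C|\ge1$ there is $i\in N'$ with $|B(i,y)\cap W|\ge1$. $\alpha$-proportional fairness: there is no $N'\subseteq N$ with $|N'|\ge n/k$ and $c\in C\setminus W$ with $\alpha\,d(i,c)<d(i,W)$ for all $i\in N'$. $\beta$-individual fairness (defined only for instances with $N\subseteq C$): $d(i,W)\le\beta\,r(i)$ for all $i\in N$, where $r(i)=\min\{r: |B(i,r)\cap N|\ge n/k\}$. $(\gamma,\alpha)$-transferable core: there is no $N'\subseteq N$ and $c\in C\setminus W$ with $|N'|\ge\gamma n/k$ and $\alpha\sum_{i\in N'}d(i,c)<\sum_{i\in N'}d(i,W)$. *)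

theory Defs
  imports "HOL-Analysis.Analysis"
begin

(* Agents: a finite set N of indices, agent i located at loc i in the metric space 'a.
   n = card N. Candidates: a finite set C of points. Ball B(i,r) = cball (loc i) r.
   d(i,W) = infdist (loc i) W. *)

definition outcome :: "'a set \<Rightarrow> nat \<Rightarrow> 'a set \<Rightarrow> bool" where
  "outcome C k W \<longleftrightarrow> W \<subseteq> C \<and> card W \<le> k"

definition rank_JR :: "'b set \<Rightarrow> ('b \<Rightarrow> 'a::metric_space) \<Rightarrow> 'a set \<Rightarrow> nat \<Rightarrow> 'a set \<Rightarrow> bool" where
  "rank_JR N loc C k W \<longleftrightarrow>
     (\<forall>y::real. \<forall>N'. N' \<subseteq> N \<and> real (card N') \<ge> real (card N) / real k
        \<and> card ((\<Inter>i\<in>N'. cball (loc i) y) \<inter> C) \<ge> 1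
        \<longrightarrow> (\<exists>i\<in>N'. card (cball (loc i) y \<inter> W) \<ge> 1))"

definition prop_fair :: "real \<Rightarrow> 'b set \<Rightarrow> ('b \<Rightarrow> 'a::metric_space) \<Rightarrow> 'a set \<Rightarrow> nat \<Rightarrow> 'a set \<Rightarrow> bool" where
  "prop_fair \<alpha> N loc C k W \<longleftrightarrow>
     \<not> (\<exists>N' c. N' \<subseteq> N \<and> real (card N') \<ge> real (card N) / real k \<and> c \<in> C - W \<and>
              (\<forall>i\<in>N'. \<alpha> * dist (loc i) c < infdist (loc i) W))"

definition ind_radius :: "'b set \<Rightarrow> ('b \<Rightarrow> 'a::metric_space) \<Rightarrow> nat \<Rightarrow> 'b \<Rightarrow> real" where
  "ind_radius N loc k i =
     (LEAST r::real. real (card {j\<in>N. loc j \<in> cball (loc i) r}) \<ge> real (card N) / real k)"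

definition ind_fair :: "real \<Rightarrow> 'b set \<Rightarrow> ('b \<Rightarrow> 'a::metric_space) \<Rightarrow> nat \<Rightarrow> 'a set \<Rightarrow> bool" where
  "ind_fair \<beta> N loc k W \<longleftrightarrow> (\<forall>i\<in>N. infdist (loc i) W \<le> \<beta> * ind_radius N loc k i)"

definition transferable_core :: "real \<Rightarrow> real \<Rightarrow> 'b set \<Rightarrow> ('b \<Rightarrow> 'a::metric_space) \<Rightarrow> 'a set \<Rightarrow> nat \<Rightarrow> 'a set \<Rightarrow> bool" where
  "transferable_core \<gamma> \<alpha> N loc C k W \<longleftrightarrow>
     \<not> (\<exists>N' c. N' \<subseteq> N \<and> real (card N') \<ge> \<gamma> * real (card N) / real k \<and> c \<in> C - W \<and>
              \<alpha> * (\<Sum>i\<in>N'. dist (loc i) c) < (\<Sum>i\<in>N'. infdist (loc i) W))"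

end

theory Submission
  imports Defs
begin

(* Everything rests on one consequence of rank-JR: if at least n/k agents all lie within
   distance y of a common candidate, one of them lies within y of W.

   Proportional fairness: apply this at the distance D of the deviating agent m farthest from
   the candidate c. The served agent j gives d(m,W) \<le> 2 D + d(j,c) while \<alpha> d(j,c) < D, which is
   impossible once \<alpha>^2 \<ge> 2 \<alpha> + 1, i.e. \<alpha> \<ge> 1 + sqrt 2.
   Individual fairness: apply it to the agents in the ball of radius r(i) around i, which is
   itself a candidate; then d(i,W) \<le> r(i) + r(i).
   Transferable core: for every y fewer than n/k deviators satisfy d(i,c) \<le> y < d(i,W).
   Integrating over y bounds the sum of (d(i,W) - 2 d(i,c))^+ by (n/k) d(c,W); taking
   y = d(c,W)/2 shows that all but n/k deviators are at least d(c,W)/2 away from c.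
   With |N'| \<ge> \<gamma> n/k the two bounds give \<Sum> d(i,W) \<le> 2\<gamma>/(\<gamma>-1) \<Sum> d(i,c). *)

(* LEAST over the reals is junk unless a least element exists; here it does, since the set
   {j \<in> A. f j \<le> r} only changes at the finitely many values of f. *)
lemma Least_threshold_attained:
  fixes f :: "'j \<Rightarrow> real" and P :: "'j set \<Rightarrow> bool"
  assumes "finite A" and "\<not> P {}" and "P {j\<in>A. f j \<le> r}"
  shows "P {j\<in>A. f j \<le> (LEAST r. P {j\<in>A. f j \<le> r})}"
proof -
  define R where "R = {x \<in> f ` A. P {j\<in>A. f j \<le> x}}"
  have below_R: "\<exists>x\<in>R. x \<le> r" if "P {j\<in>A. f j \<le> r}" for r
  proof -
    let ?S = "{j\<in>A. f j \<le> r}"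
    have "?S \<noteq> {}" using that \<open>\<not> P {}\<close> by (metis (no_types))
    then have "Max (f ` ?S) \<in> f ` ?S"
      using \<open>finite A\<close> by (intro Max_in) auto
    then have in_A: "Max (f ` ?S) \<in> f ` A" and le_r: "Max (f ` ?S) \<le> r"
      by auto
    have "f j \<le> Max (f ` ?S)" if "j \<in> ?S" for j
      using \<open>finite A\<close> that by (intro Max_ge) auto
    then have "{j\<in>A. f j \<le> Max (f ` ?S)} = ?S"
      using le_r by (blast intro: order_trans)
    then have "Max (f ` ?S) \<in> R"
      using that in_A unfolding R_def by simp
    then show ?thesis
      using le_r by blast
  qed
  have "finite R" and "R \<noteq> {}"
    using \<open>finite A\<close> below_R[OF assms(3)] unfolding R_def by auto
  have "P {j\<in>A. f j \<le> Min R}"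
    using Min_in[OF \<open>finite R\<close> \<open>R \<noteq> {}\<close>] unfolding R_def by blast
  moreover have "(LEAST r. P {j\<in>A. f j \<le> r}) = Min R"
  proof (rule Least_equality)
    show "P {j\<in>A. f j \<le> Min R}" by fact
    show "Min R \<le> r" if "P {j\<in>A. f j \<le> r}" for r
      using below_R[OF that] \<open>finite R\<close> by (meson Min_le order_trans)
  qed
  ultimately show ?thesis by simp
qed

lemma sum_interval_lengths_le:
  fixes I :: "'i set" and s e :: "'i \<Rightarrow> real"
  assumes "finite I" and "\<forall>i\<in>I. lo \<le> s i \<and> s i \<le> e i \<and> e i \<le> hi" and "lo \<le> hi"
    and "\<forall>y. real (card {i\<in>I. s i \<le> y \<and> y < e i}) \<le> T"
  shows "(\<Sum>i\<in>I. e i - s i) \<le> T * (hi - lo)"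
proof -
  let ?cover = "\<lambda>y. card {i\<in>I. s i \<le> y \<and> y < e i}"
  have "0 \<le> T"
    using assms(4) of_nat_0_le_iff order_trans by blast
  have pointwise: "(\<Sum>i\<in>I. indicator {s i..<e i} y :: ennreal) \<le> ennreal T * indicator {lo..<hi} y" for y
  proof -
    have "(\<Sum>i\<in>I. indicator {s i..<e i} y :: ennreal) = (\<Sum>i\<in>{i\<in>I. s i \<le> y \<and> y < e i}. 1)"
      using \<open>finite I\<close> by (intro sum.mono_neutral_cong_right) (auto simp: indicator_def)
    also have "\<dots> = of_nat (?cover y)"
      by simp
    finally have sum_eq: "(\<Sum>i\<in>I. indicator {s i..<e i} y :: ennreal) = of_nat (?cover y)" .
    show ?thesis
    proof (cases "lo \<le> y \<and> y < hi")
      case True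
      have "of_nat (?cover y) \<le> ennreal T"
        unfolding ennreal_of_nat_eq_real_of_nat using assms(4) by (simp add: ennreal_leI)
      then show ?thesis
        using True sum_eq by (simp add: indicator_def)
    next
      case False
      then have "{i\<in>I. s i \<le> y \<and> y < e i} = {}"
        using assms(2) by force
      then show ?thesis
        using sum_eq by simp
    qed
  qed
  have "ennreal (\<Sum>i\<in>I. e i - s i) = (\<Sum>i\<in>I. emeasure lborel {s i..<e i})"
    using assms(2) by (subst sum_ennreal[symmetric]) auto
  also have "\<dots> = (\<integral>\<^sup>+ y. (\<Sum>i\<in>I. indicator {s i..<e i} y) \<partial>lborel)"
    by (subst nn_integral_sum) auto
  also have "\<dots> \<le> (\<integral>\<^sup>+ y. ennreal T * indicator {lo..<hi} y \<partial>lborel)"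
    by (intro nn_integral_mono pointwise)
  also have "\<dots> = ennreal (T * (hi - lo))"
    using \<open>0 \<le> T\<close> \<open>lo \<le> hi\<close> by (simp add: nn_integral_cmult_indicator ennreal_mult)
  finally show ?thesis
    using \<open>0 \<le> T\<close> \<open>lo \<le> hi\<close> by simp
qed

lemma one_plus_sqrt2_le_imp_less:
  fixes \<alpha> x D :: real
  assumes "1 + sqrt 2 \<le> \<alpha>" and "\<alpha> * x < D" and "0 \<le> D"
  shows "2 * D + x < \<alpha> * D"
proof -
  have "0 < \<alpha>"
    using assms(1) real_sqrt_ge_zero[of 2] by linarith
  have "2 \<le> (\<alpha> - 1)\<^sup>2"
    using power_mono[of "sqrt 2" "\<alpha> - 1" 2] assms(1) by simp
  then have "0 \<le> (\<alpha>\<^sup>2 - 2 * \<alpha> - 1) * D"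
    using assms(3) by (simp add: power2_diff)
  then have "\<alpha> * (2 * D + x) < \<alpha> * (\<alpha> * D)"
    using assms(2) by (simp add: algebra_simps power2_eq_square)
  then show ?thesis
    using \<open>0 < \<alpha>\<close> by simp
qed

lemma rank_JR_serves_cohesive_group:
  assumes "rank_JR N loc C k W" and "finite C"
    and "G \<subseteq> N" and "real (card N) / real k \<le> real (card G)"
    and "c \<in> C" and "\<forall>i\<in>G. dist (loc i) c \<le> y"
  shows "\<exists>i\<in>G. infdist (loc i) W \<le> y"
proof -
  have "c \<in> (\<Inter>i\<in>G. cball (loc i) y) \<inter> C"
    using assms(5,6) by auto
  then have "card ((\<Inter>i\<in>G. cball (loc i) y) \<inter> C) \<ge> 1"
    using \<open>finite C\<close> by (metis One_nat_def Suc_leI card_gt_0_iff empty_iff finite_Int)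
  then obtain i where "i \<in> G" and "card (cball (loc i) y \<inter> W) \<ge> 1"
    using assms(1-4) unfolding rank_JR_def by blast
  then obtain u where "u \<in> W" and "dist (loc i) u \<le> y"
    by (metis card.empty disjoint_iff mem_cball not_one_le_zero)
  then show ?thesis
    using \<open>i \<in> G\<close> infdist_le2 by blast
qed

lemma rank_JR_few_underserved:
  assumes "rank_JR N loc C k W" and "finite C" and "G \<subseteq> N" and "c \<in> C"
  shows "real (card {i\<in>G. dist (loc i) c \<le> y \<and> y < infdist (loc i) W}) < real (card N) / real k"
proof (rule ccontr)
  let ?U = "{i\<in>G. dist (loc i) c \<le> y \<and> y < infdist (loc i) W}"
  assume "\<not> real (card ?U) < real (card N) / real k"
  then have large: "real (card N) / real k \<le> real (card ?U)"
    by (simp only: not_less)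
  have "?U \<subseteq> N"
    using assms(3) by blast
  have "\<forall>i\<in>?U. dist (loc i) c \<le> y"
    by blast
  from rank_JR_serves_cohesive_group[OF assms(1,2) \<open>?U \<subseteq> N\<close> large assms(4) this]
  show False
    by force
qed

lemma ind_radius_ball_card_ge:
  assumes "finite N" and "i \<in> N" and "k > 0"
  shows "real (card N) / real k \<le> real (card {j\<in>N. loc j \<in> cball (loc i) (ind_radius N loc k i)})"
proof -
  define T where "T = real (card N) / real k"
  let ?d = "\<lambda>j. dist (loc i) (loc j)"
  have "card N > 0"
    using assms(1,2) card_gt_0_iff by blast
  then have "\<not> T \<le> real (card {})"
    unfolding T_def using \<open>k > 0\<close> by (simp add: not_le zero_less_divide_iff)
  moreover have "{j\<in>N. ?d j \<le> Max (?d ` N)} = N"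
    using \<open>finite N\<close> by (auto intro: Max_ge)
  moreover have "T \<le> real (card N)"
    using \<open>k > 0\<close> unfolding T_def by (simp add: divide_le_eq mult_le_cancel_left1)
  ultimately have "T \<le> real (card {j\<in>N. ?d j \<le> (LEAST r. T \<le> real (card {j\<in>N. ?d j \<le> r}))})"
    using Least_threshold_attained[OF \<open>finite N\<close>, where P = "\<lambda>S. T \<le> real (card S)" and r = "Max (?d ` N)"]
    by simp
  then show ?thesis
    unfolding ind_radius_def T_def by simp
qed

lemma rank_JR_imp_ind_fair:
  assumes "rank_JR N loc C k W" and "finite N" and "finite C" and "k > 0" and "loc ` N \<subseteq> C"
  shows "ind_fair 2 N loc k W"
  unfolding ind_fair_def
proof
  fix i assume "i \<in> N"
  define r where "r = ind_radius N loc k i"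
  define S where "S = {j\<in>N. loc j \<in> cball (loc i) r}"
  have "S \<subseteq> N"
    unfolding S_def by blast
  moreover have "real (card N) / real k \<le> real (card S)"
    using ind_radius_ball_card_ge[OF assms(2) \<open>i \<in> N\<close> assms(4)] unfolding S_def r_def .
  moreover have "loc i \<in> C"
    using assms(5) \<open>i \<in> N\<close> by blast
  moreover have "\<forall>j\<in>S. dist (loc j) (loc i) \<le> r"
    unfolding S_def by (simp add: dist_commute)
  ultimately obtain j where "j \<in> S" and "infdist (loc j) W \<le> r"
    using rank_JR_serves_cohesive_group[OF assms(1,3)] by meson
  moreover have "dist (loc i) (loc j) \<le> r"
    using \<open>j \<in> S\<close> unfolding S_def by simp
  ultimately show "infdist (loc i) W \<le> 2 * ind_radius N loc k i"
    using infdist_triangle[of "loc i" W "loc j"] unfolding r_def by linarith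
qed

lemma rank_JR_imp_prop_fair:
  assumes "rank_JR N loc C k W" and "finite N" and "finite C" and "1 + sqrt 2 \<le> \<alpha>"
  shows "prop_fair \<alpha> N loc C k W"
  unfolding prop_fair_def
proof
  assume "\<exists>N' c. N' \<subseteq> N \<and> real (card N') \<ge> real (card N) / real k \<and> c \<in> C - W \<and>
            (\<forall>i\<in>N'. \<alpha> * dist (loc i) c < infdist (loc i) W)"
  then obtain G c where G: "G \<subseteq> N" "real (card N) / real k \<le> real (card G)" "c \<in> C"
    and worse: "\<forall>i\<in>G. \<alpha> * dist (loc i) c < infdist (loc i) W"
    by blast
  have "finite G"
    using G(1) \<open>finite N\<close> finite_subset by blast
  define D where "D = Max ((\<lambda>i. dist (loc i) c) ` G)"
  have le_D: "\<forall>i\<in>G. dist (loc i) c \<le> D"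
    using \<open>finite G\<close> unfolding D_def by simp
  obtain j where "j \<in> G" and j_served: "infdist (loc j) W \<le> D"
    using rank_JR_serves_cohesive_group[OF assms(1,3) G le_D] by blast
  then have "D \<in> (\<lambda>i. dist (loc i) c) ` G"
    unfolding D_def using \<open>finite G\<close> by (intro Max_in) auto
  then obtain m where "m \<in> G" and m_far: "dist (loc m) c = D"
    by auto
  have "0 \<le> D"
    using m_far by auto
  have near: "\<alpha> * dist (loc j) c < D"
    using worse \<open>j \<in> G\<close> j_served by fastforce
  have "\<alpha> * D < infdist (loc m) W"
    using worse \<open>m \<in> G\<close> m_far by blast
  also have "\<dots> \<le> infdist (loc j) W + dist (loc m) (loc j)"
    by (rule infdist_triangle)
  also have "\<dots> \<le> 2 * D + dist (loc j) c"
    using j_served m_far dist_triangle[of "loc m" "loc j" c] by (simp add: dist_commute)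
  finally have "\<alpha> * D < 2 * D + dist (loc j) c" .
  moreover have "2 * D + dist (loc j) c < \<alpha> * D"
    using one_plus_sqrt2_le_imp_less[OF assms(4) near \<open>0 \<le> D\<close>] .
  ultimately show False
    by linarith
qed

lemma rank_JR_sum_infdist_le:
  assumes "rank_JR N loc C k W" and "finite C" and "G \<subseteq> N" and "finite G" and "c \<in> C"
  shows "(\<Sum>i\<in>G. infdist (loc i) W)
           \<le> 2 * (\<Sum>i\<in>G. dist (loc i) c) + real (card N) / real k * infdist c W"
proof -
  define T where "T = real (card N) / real k"
  define a where "a i = dist (loc i) c" for i
  define b where "b i = infdist (loc i) W" for i
  define D where "D = infdist c W"
  define B where "B = {i\<in>G. 2 * a i < b i}"
  have "B \<subseteq> G" and "finite B"
    using \<open>finite G\<close> unfolding B_def by auto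
  have "(\<Sum>i\<in>B. (b i - a i) - a i) \<le> T * (D - 0)"
  proof (rule sum_interval_lengths_le[OF \<open>finite B\<close>])
    show "\<forall>i\<in>B. 0 \<le> a i \<and> a i \<le> b i - a i \<and> b i - a i \<le> D"
    proof
      fix i assume "i \<in> B"
      have "b i \<le> D + a i"
        using infdist_triangle[of "loc i" W c] unfolding a_def b_def D_def .
      then show "0 \<le> a i \<and> a i \<le> b i - a i \<and> b i - a i \<le> D"
        using \<open>i \<in> B\<close> unfolding B_def a_def by auto
    qed
    show "0 \<le> D"
      unfolding D_def by (rule infdist_nonneg)
    show "\<forall>y. real (card {i\<in>B. a i \<le> y \<and> y < b i - a i}) \<le> T"
    proof
      fix y
      have "{i\<in>B. a i \<le> y \<and> y < b i - a i} \<subseteq> {i\<in>G. a i \<le> y \<and> y < b i}"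
      proof
        fix i assume "i \<in> {i\<in>B. a i \<le> y \<and> y < b i - a i}"
        moreover have "0 \<le> a i"
          by (simp add: a_def)
        ultimately show "i \<in> {i\<in>G. a i \<le> y \<and> y < b i}"
          unfolding B_def by auto
      qed
      then have "card {i\<in>B. a i \<le> y \<and> y < b i - a i} \<le> card {i\<in>G. a i \<le> y \<and> y < b i}"
        using \<open>finite G\<close> by (intro card_mono) auto
      then show "real (card {i\<in>B. a i \<le> y \<and> y < b i - a i}) \<le> T"
        using rank_JR_few_underserved[OF assms(1,2,3,5), of y]
        unfolding T_def a_def b_def by linarith
    qed
  qed
  moreover have "(\<Sum>i\<in>G - B. b i - 2 * a i) \<le> 0"
    by (intro sum_nonpos) (auto simp: B_def)
  moreover have "(\<Sum>i\<in>G. b i - 2 * a i) = (\<Sum>i\<in>B. b i - 2 * a i) + (\<Sum>i\<in>G - B. b i - 2 * a i)"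
    using \<open>finite G\<close> \<open>B \<subseteq> G\<close> by (metis add.commute sum.subset_diff)
  ultimately have "(\<Sum>i\<in>G. b i - 2 * a i) \<le> T * D"
    by (simp add: algebra_simps)
  then show ?thesis
    unfolding T_def a_def b_def D_def by (simp add: sum_subtractf sum_distrib_left algebra_simps)
qed

lemma rank_JR_sum_dist_ge:
  assumes "rank_JR N loc C k W" and "finite C" and "G \<subseteq> N" and "finite G" and "c \<in> C"
  shows "(real (card G) - real (card N) / real k) * infdist c W \<le> 2 * (\<Sum>i\<in>G. dist (loc i) c)"
proof -
  define T where "T = real (card N) / real k"
  define D where "D = infdist c W"
  define L where "L = {i\<in>G. dist (loc i) c < D / 2}"
  have "L \<subseteq> G" and "finite L"
    using \<open>finite G\<close> unfolding L_def by auto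
  have "L \<subseteq> {i\<in>G. dist (loc i) c \<le> D / 2 \<and> D / 2 < infdist (loc i) W}"
  proof
    fix i assume "i \<in> L"
    have "D \<le> infdist (loc i) W + dist (loc i) c"
      using infdist_triangle[of c W "loc i"] unfolding D_def by (simp add: dist_commute)
    then show "i \<in> {i\<in>G. dist (loc i) c \<le> D / 2 \<and> D / 2 < infdist (loc i) W}"
      using \<open>i \<in> L\<close> unfolding L_def by auto
  qed
  then have "card L \<le> card {i\<in>G. dist (loc i) c \<le> D / 2 \<and> D / 2 < infdist (loc i) W}"
    using \<open>finite G\<close> by (intro card_mono) auto
  then have "real (card L) < T"
    using rank_JR_few_underserved[OF assms(1,2,3,5), of "D / 2"] unfolding T_def by linarith
  then have "real (card G) - T \<le> real (card (G - L))"
    using \<open>L \<subseteq> G\<close> \<open>finite L\<close> by (simp add: card_Diff_subset of_nat_diff card_mono \<open>finite G\<close>)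
  then have "(real (card G) - T) * (D / 2) \<le> real (card (G - L)) * (D / 2)"
    using infdist_nonneg[of c W] unfolding D_def by (intro mult_right_mono) auto
  also have "\<dots> = (\<Sum>i\<in>G - L. D / 2)"
    by simp
  also have "\<dots> \<le> (\<Sum>i\<in>G - L. dist (loc i) c)"
    by (intro sum_mono) (auto simp: L_def)
  also have "\<dots> \<le> (\<Sum>i\<in>G. dist (loc i) c)"
    using \<open>finite G\<close> by (intro sum_mono2) auto
  finally show ?thesis
    unfolding T_def D_def by simp
qed

lemma rank_JR_imp_transferable_core:
  assumes "rank_JR N loc C k W" and "finite N" and "finite C" and "\<gamma> > 1"
  shows "transferable_core \<gamma> (2 * \<gamma> / (\<gamma> - 1)) N loc C k W"
  unfolding transferable_core_def
proof
  define T where "T = real (card N) / real k"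
  assume "\<exists>N' c. N' \<subseteq> N \<and> real (card N') \<ge> \<gamma> * real (card N) / real k \<and> c \<in> C - W \<and>
            2 * \<gamma> / (\<gamma> - 1) * (\<Sum>i\<in>N'. dist (loc i) c) < (\<Sum>i\<in>N'. infdist (loc i) W)"
  then obtain G c where "G \<subseteq> N" and "\<gamma> * T \<le> real (card G)" and "c \<in> C"
    and deviation: "2 * \<gamma> / (\<gamma> - 1) * (\<Sum>i\<in>G. dist (loc i) c) < (\<Sum>i\<in>G. infdist (loc i) W)"
    unfolding T_def by auto
  have "finite G"
    using \<open>G \<subseteq> N\<close> \<open>finite N\<close> finite_subset by blast
  define Sa where "Sa = (\<Sum>i\<in>G. dist (loc i) c)"
  define Sb where "Sb = (\<Sum>i\<in>G. infdist (loc i) W)"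
  define D where "D = infdist c W"
  have upper: "Sb \<le> 2 * Sa + T * D"
    using rank_JR_sum_infdist_le[OF assms(1,3) \<open>G \<subseteq> N\<close> \<open>finite G\<close> \<open>c \<in> C\<close>]
    unfolding Sa_def Sb_def T_def D_def .
  have "(\<gamma> - 1) * T * D \<le> (real (card G) - T) * D"
    using \<open>\<gamma> * T \<le> real (card G)\<close> infdist_nonneg[of c W]
    unfolding D_def by (intro mult_right_mono) (auto simp: algebra_simps)
  also have "\<dots> \<le> 2 * Sa"
    using rank_JR_sum_dist_ge[OF assms(1,3) \<open>G \<subseteq> N\<close> \<open>finite G\<close> \<open>c \<in> C\<close>]
    unfolding Sa_def T_def D_def .
  finally have lower: "(\<gamma> - 1) * T * D \<le> 2 * Sa" .
  have "2 * \<gamma> * Sa < (\<gamma> - 1) * Sb"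
    using deviation assms(4) unfolding Sa_def Sb_def by (simp add: field_simps)
  also have "\<dots> \<le> (\<gamma> - 1) * (2 * Sa + T * D)"
    using upper assms(4) by (intro mult_left_mono) auto
  also have "\<dots> \<le> 2 * \<gamma> * Sa"
    using lower by (simp add: algebra_simps)
  finally show False
    by simp
qed

theorem theorem5:
  fixes N :: "'b set" and loc :: "'b \<Rightarrow> 'a::metric_space" and C W :: "'a set" and k :: nat
  assumes "finite N" and "N \<noteq> {}" and "finite C" and "k > 0"
    and "outcome C k W"
    and "rank_JR N loc C k W"
  shows "prop_fair (1 + sqrt 2) N loc C k W
         \<and> (loc ` N \<subseteq> C \<longrightarrow> ind_fair 2 N loc k W)
         \<and> (\<forall>\<gamma>::real. \<gamma> > 1 \<longrightarrow> transferable_core \<gamma> (2 * \<gamma> / (\<gamma> - 1)) N loc C k W)"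
  using rank_JR_imp_prop_fair[OF assms(6,1,3) order_refl]
    rank_JR_imp_ind_fair[OF assms(6,1,3,4)]
    rank_JR_imp_transferable_core[OF assms(6,1,3)]
  by blast

end
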